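(* There exists a computable (2,1):1 structure $\mathcal{A}=(\omega,f)$ such that $\beta_{\mathcal{A}}$ is computable but $iso_{\mathcal{A}}$ is not computable (i.e. there is no partial computable function $\varphi$ with $\varphi(x)=iso_{\mathcal{A}}(x)$ for all $x\in\Lambda_{\mathcal{A}}$).
   Context: A (2,1):1 structure is a pair $\mathcal{A}=(A,f)$ with $A$ a countable set and $f:A\to A$ such that $|f^{-1}(a)|\in\{1,2\}$ for every $a\in A$; it is computable if $A$ is a computable set and $f$ is computable. The branching function is $\beta_{\mathcal{A}}(x)=|f^{-1}(x)|\in\{1,2\}$, and $\Lambda_{\mathcal{A}}=\{x:\beta_{\mathcal{A}}(x)=2\}$. For $x\in A$, $Tree_{\mathcal{A}}(x)$ is the directed graph with vertex set $\{a:\exists n\ge0\,(f^n(a)=x)\}$ and edges $(a,f(a))$ for $a$, $f(a)$ both in this set. The branch isomorphism function $iso_{\mathcal{A}}:\Lambda_{\mathcal{A}}\to\{0,1\}$ is defined, for $x\in\Lambda_{\mathcal{A}}$ with distinct pre-images $x_1,x_2$, by $iso_{\mathcal{A}}(x)=1$ if $Tree_{\mathcal{A}}(x_1)\cong Tree_{\mathcal{A}}(x_2)$ and $iso_{\mathcal{A}}(x)=0$ otherwise. *)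

theory Defs
  imports Main
begin

datatype recf = Zero | Succ | Proj nat | Comp recf "recf list" | Prim recf recf | Mn recf

inductive eval :: "recf \<Rightarrow> nat list \<Rightarrow> nat \<Rightarrow> bool" where
  zero: "eval Zero xs 0"
| succ: "eval Succ (x # xs) (Suc x)"
| proj: "i < length xs \<Longrightarrow> eval (Proj i) xs (xs ! i)"
| comp: "list_all2 (\<lambda>g y. eval g xs y) gs ys \<Longrightarrow> eval f ys z \<Longrightarrow> eval (Comp f gs) xs z"
| prim0: "eval f xs y \<Longrightarrow> eval (Prim f g) (0 # xs) y"
| primS: "eval (Prim f g) (n # xs) y \<Longrightarrow> eval g (n # y # xs) z \<Longrightarrow> eval (Prim f g) (Suc n # xs) z"
| mn: "eval f (n # xs) 0 \<Longrightarrow> (\<forall>m<n. \<exists>y. eval f (m # xs) (Suc y)) \<Longrightarrow> eval (Mn f) xs n"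
monos list_all2_mono

definition computable1 :: "(nat \<Rightarrow> nat) \<Rightarrow> bool" where
  "computable1 h \<longleftrightarrow> (\<exists>r. \<forall>x. eval r [x] (h x))"

definition is_21_structure :: "(nat \<Rightarrow> nat) \<Rightarrow> bool" where
  "is_21_structure f \<longleftrightarrow> (\<forall>a. card (f -` {a}) \<in> {1, 2})"

definition branching :: "(nat \<Rightarrow> nat) \<Rightarrow> nat \<Rightarrow> nat" where
  "branching f x = card (f -` {x})"

definition Lambda :: "(nat \<Rightarrow> nat) \<Rightarrow> nat set" where
  "Lambda f = {x. branching f x = 2}"

definition tree_verts :: "(nat \<Rightarrow> nat) \<Rightarrow> nat \<Rightarrow> nat set" where
  "tree_verts f x = {a. \<exists>n. (f ^^ n) a = x}"

definition tree_edges :: "(nat \<Rightarrow> nat) \<Rightarrow> nat \<Rightarrow> (nat \<times> nat) set" where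
  "tree_edges f x = {(a, f a) | a. a \<in> tree_verts f x \<and> f a \<in> tree_verts f x}"

definition tree_iso :: "(nat \<Rightarrow> nat) \<Rightarrow> nat \<Rightarrow> nat \<Rightarrow> bool" where
  "tree_iso f x y \<longleftrightarrow> (\<exists>h. bij_betw h (tree_verts f x) (tree_verts f y) \<and>
     (\<forall>a\<in>tree_verts f x. \<forall>b\<in>tree_verts f x.
        (a, b) \<in> tree_edges f x \<longleftrightarrow> (h a, h b) \<in> tree_edges f y))"

text \<open>Branch isomorphism function (meaningful on Lambda f, where there are exactly two pre-images).\<close>
definition iso_fun :: "(nat \<Rightarrow> nat) \<Rightarrow> nat \<Rightarrow> nat" where
  "iso_fun f x = (if \<exists>x1 x2. x1 \<noteq> x2 \<and> f x1 = x \<and> f x2 = x \<and> tree_iso f x1 x2 then 1 else 0)"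

end

theory Submission
  imports Defs "HOL-Library.Nat_Bijection"
begin

text \<open>
  Every number e is read as the code of a program, and the structure contains a gadget for e:
  a root with two branches, both infinite chains, except that the second branch gets an extra
  spur at depth n whenever n certifies that program e outputs 1 on the root itself. The branches
  are isomorphic iff no certificate exists. Hence a program e computing the branch isomorphism
  function would output 1 on its own root exactly when the correct answer there is 0.
  Certificates are finite logs of a computation, each entry justified by earlier ones; checking a
  log is primitive recursive, so the structure and its branching function are computable.
\<close>

section \<open>Primitive recursive codes\<close>

fun prim_val :: "recf \<Rightarrow> nat list \<Rightarrow> nat" where
  "prim_val Zero xs = 0"
| "prim_val Succ xs = Suc (hd xs)"
| "prim_val (Proj i) xs = xs ! i"
| "prim_val (Comp f gs) xs = prim_val f (map (\<lambda>g. prim_val g xs) gs)"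
| "prim_val (Prim f g) xs = (case xs of [] \<Rightarrow> 0 | n # ys \<Rightarrow> rec_nat (prim_val f ys) (\<lambda>k acc. prim_val g (k # acc # ys)) n)"
| "prim_val (Mn f) xs = 0"

fun prim_code :: "recf \<Rightarrow> nat \<Rightarrow> bool" where
  "prim_code Zero n = True"
| "prim_code Succ n = (1 \<le> n)"
| "prim_code (Proj i) n = (i < n)"
| "prim_code (Comp f gs) n = (prim_code f (length gs) \<and> (\<forall>g\<in>set gs. prim_code g n))"
| "prim_code (Prim f g) n = (1 \<le> n \<and> prim_code f (n - 1) \<and> prim_code g (n + 1))"
| "prim_code (Mn f) n = False"

lemma prim_val_Prim_Cons: "prim_val (Prim f g) (0 # ys) = prim_val f ys"
  "prim_val (Prim f g) (Suc n # ys) = prim_val g (n # prim_val (Prim f g) (n # ys) # ys)"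
  by simp_all

lemma eval_prim_val:
  "prim_code r n \<Longrightarrow> n \<le> length xs \<Longrightarrow> eval r xs (prim_val r xs)"
proof (induction r arbitrary: n xs)
  case Zero then show ?case by (auto intro: eval.intros)
next
  case Succ then show ?case by (cases xs) (auto intro: eval.intros)
next
  case (Proj i) then show ?case by (auto intro: eval.intros)
next
  case (Comp f gs)
  have "list_all2 (\<lambda>g y. eval g xs y) gs (map (\<lambda>g. prim_val g xs) gs)"
    using Comp by (auto simp: list_all2_conv_all_nth intro!: Comp.IH(2) nth_mem)
  moreover have "eval f (map (\<lambda>g. prim_val g xs) gs) (prim_val f (map (\<lambda>g. prim_val g xs) gs))"
    using Comp by auto
  ultimately show ?case by (auto intro: eval.comp)
next
  case (Prim f g)
  then obtain m ys where xs: "xs = m # ys" by (cases xs) auto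
  have "eval (Prim f g) (k # ys) (prim_val (Prim f g) (k # ys))" for k
  proof (induction k)
    case 0 then show ?case using Prim xs by (auto intro: eval.prim0)
  next
    case (Suc k)
    have "eval g (k # prim_val (Prim f g) (k # ys) # ys) (prim_val g (k # prim_val (Prim f g) (k # ys) # ys))"
      using Prim xs by (intro Prim.IH(2)[of "n+1"]) auto
    then show ?case using Suc by (auto intro: eval.primS)
  qed
  then show ?case using xs by simp
next
  case (Mn f) then show ?case by simp
qed

declare prim_val.simps(5)[simp del]

lemma computable1_prim_code:
  "prim_code r 1 \<Longrightarrow> (\<And>x. prim_val r [x] = h x) \<Longrightarrow> computable1 h"
  unfolding computable1_def using eval_prim_val[of r 1 "[_]"] by auto

inductive_cases eval_ZeroE: "eval Zero xs y"
inductive_cases eval_SuccE: "eval Succ xs y"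
inductive_cases eval_ProjE: "eval (Proj i) xs y"
inductive_cases eval_CompE: "eval (Comp f gs) xs y"
inductive_cases eval_Prim0E: "eval (Prim f g) (0 # xs) y"
inductive_cases eval_PrimSE: "eval (Prim f g) (Suc n # xs) y"
inductive_cases eval_MnE: "eval (Mn f) xs y"

lemma eval_deterministic: "eval r xs y \<Longrightarrow> eval r xs z \<Longrightarrow> y = z"
proof (induction r xs y arbitrary: z rule: eval.induct)
  case zero then show ?case by (auto elim: eval_ZeroE)
next
  case succ then show ?case by (auto elim: eval_SuccE)
next
  case proj then show ?case by (auto elim: eval_ProjE)
next
  case (comp xs gs ys f y)
  from \<open>eval (Comp f gs) xs z\<close> obtain ys' where ys': "list_all2 (\<lambda>g y. eval g xs y) gs ys'" "eval f ys' z"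
    by (rule eval_CompE)
  have "ys = ys'"
  proof (rule nth_equalityI)
    show "length ys = length ys'" using comp.IH(1) ys'(1) by (simp add: list_all2_lengthD[symmetric])
    show "ys ! i = ys' ! i" if "i < length ys" for i
      using that comp.IH(1) ys'(1) by (auto simp: list_all2_conv_all_nth)
  qed
  then show ?case using comp.IH(2) ys'(2) by blast
next
  case prim0
  from prim0.prems show ?case by (rule eval_Prim0E) (rule prim0.IH)
next
  case (primS f g n xs y y')
  from \<open>eval (Prim f g) (Suc n # xs) z\<close> obtain w where "eval (Prim f g) (n # xs) w" "eval g (n # w # xs) z"
    by (rule eval_PrimSE) blast
  then show ?case using primS.IH by metis
next
  case (mn f n xs)
  from \<open>eval (Mn f) xs z\<close> have z0: "eval f (z # xs) 0" and zpos: "\<forall>m<z. \<exists>y. eval f (m # xs) (Suc y)"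
    by (rule eval_MnE, auto)+
  show ?case
  proof (rule linorder_cases[of n z])
    assume "n < z"
    then obtain y where "eval f (n # xs) (Suc y)" using zpos by blast
    then show ?thesis using mn.IH(1) by fastforce
  next
    assume "z < n"
    then obtain y where "eval f (z # xs) (Suc y)" "\<And>w. eval f (z # xs) w \<Longrightarrow> Suc y = w"
      using mn.IH(2) by blast
    then show ?thesis using z0 by fastforce
  qed
qed

primrec NUM :: "nat \<Rightarrow> recf" where
  "NUM 0 = Zero" | "NUM (Suc k) = Comp Succ [NUM k]"
lemma NUM[simp]: "prim_val (NUM k) xs = k" "prim_code (NUM k) n"
  by (induction k) auto

definition "SUC g = Comp Succ [g]"
lemma SUC[simp]: "prim_val (SUC g) xs = Suc (prim_val g xs)" "prim_code (SUC g) n = prim_code g n"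
  by (auto simp: SUC_def)

definition "r_add = Prim (Proj 0) (Comp Succ [Proj 1])"
lemma r_add[simp]: "prim_val r_add [a, b] = a + b" "prim_code r_add (Suc (Suc 0))"
  by (induction a) (auto simp: r_add_def prim_val_Prim_Cons)

definition "ADD g h = Comp r_add [g, h]"
lemma ADD[simp]:
  "prim_val (ADD g h) xs = prim_val g xs + prim_val h xs"
  "prim_code (ADD g h) n = (prim_code g n \<and> prim_code h n)"
  by (auto simp: ADD_def)

definition "r_mul = Prim Zero (ADD (Proj 1) (Proj 2))"
lemma r_mul[simp]: "prim_val r_mul [a, b] = a * b" "prim_code r_mul (Suc (Suc 0))"
  by (induction a) (auto simp: r_mul_def prim_val_Prim_Cons)

definition "MUL g h = Comp r_mul [g, h]"
lemma MUL[simp]: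
  "prim_val (MUL g h) xs = prim_val g xs * prim_val h xs"
  "prim_code (MUL g h) n = (prim_code g n \<and> prim_code h n)"
  by (auto simp: MUL_def)

definition "r_pred = Prim Zero (Proj 0)"
lemma r_pred[simp]: "prim_val r_pred [a] = a - 1" "prim_code r_pred (Suc 0)"
  by (cases a) (auto simp: r_pred_def prim_val_Prim_Cons)

definition "r_sub = Prim (Proj 0) (Comp r_pred [Proj 1])"
lemma r_sub[simp]: "prim_val r_sub [b, a] = a - b" "prim_code r_sub (Suc (Suc 0))"
  by (induction b) (auto simp: r_sub_def prim_val_Prim_Cons)

definition "SUB g h = Comp r_sub [h, g]"
lemma SUB[simp]:
  "prim_val (SUB g h) xs = prim_val g xs - prim_val h xs"
  "prim_code (SUB g h) n = (prim_code g n \<and> prim_code h n)"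
  by (auto simp: SUB_def)

definition "r_sg = Prim Zero (NUM 1)"
lemma r_sg[simp]: "prim_val r_sg [a] = (if a = 0 then 0 else 1)" "prim_code r_sg (Suc 0)"
  by (cases a) (auto simp: r_sg_def prim_val_Prim_Cons)

definition "r_nsg = Prim (NUM 1) Zero"
lemma r_nsg[simp]: "prim_val r_nsg [a] = (if a = 0 then 1 else 0)" "prim_code r_nsg (Suc 0)"
  by (cases a) (auto simp: r_nsg_def prim_val_Prim_Cons)

definition "SG g = Comp r_sg [g]"
lemma SG[simp]:
  "prim_val (SG g) xs = (if prim_val g xs = 0 then 0 else 1)"
  "prim_code (SG g) n = prim_code g n"
  by (auto simp: SG_def)

definition "NSG g = Comp r_nsg [g]"
lemma NSG[simp]:
  "prim_val (NSG g) xs = (if prim_val g xs = 0 then 1 else 0)"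
  "prim_code (NSG g) n = prim_code g n"
  by (auto simp: NSG_def)

definition "EQ g h = NSG (ADD (SUB g h) (SUB h g))"
lemma EQ[simp]:
  "prim_val (EQ g h) xs = (if prim_val g xs = prim_val h xs then 1 else 0)"
  "prim_code (EQ g h) n = (prim_code g n \<and> prim_code h n)"
  by (auto simp: EQ_def)

definition "LT g h = SG (SUB h g)"
lemma LT[simp]:
  "prim_val (LT g h) xs = (if prim_val g xs < prim_val h xs then 1 else 0)"
  "prim_code (LT g h) n = (prim_code g n \<and> prim_code h n)"
  by (auto simp: LT_def)

definition "AND g h = MUL (SG g) (SG h)"
lemma AND[simp]:
  "prim_val (AND g h) xs = (if prim_val g xs \<noteq> 0 \<and> prim_val h xs \<noteq> 0 then 1 else 0)"
  "prim_code (AND g h) n = (prim_code g n \<and> prim_code h n)"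
  by (auto simp: AND_def)

definition "OR g h = SG (ADD g h)"
lemma OR[simp]:
  "prim_val (OR g h) xs = (if prim_val g xs \<noteq> 0 \<or> prim_val h xs \<noteq> 0 then 1 else 0)"
  "prim_code (OR g h) n = (prim_code g n \<and> prim_code h n)"
  by (auto simp: OR_def)

definition "IF c a b = ADD (MUL (SG c) a) (MUL (NSG c) b)"
lemma IF[simp]:
  "prim_val (IF c a b) xs = (if prim_val c xs \<noteq> 0 then prim_val a xs else prim_val b xs)"
  "prim_code (IF c a b) n = (prim_code c n \<and> prim_code a n \<and> prim_code b n)"
  by (auto simp: IF_def)

text \<open>In \<open>BSUM n b p\<close> and its relatives, \<open>n\<close> is the number of ambient arguments and the bound
  variable is passed to \<open>p\<close> as its first argument; \<open>LIFT n g\<close> moves an ambient code under the binder.\<close>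

definition shifted_projs :: "nat \<Rightarrow> nat \<Rightarrow> recf list" where "shifted_projs k n = map (\<lambda>i. Proj (i + k)) [0..<n]"

lemma length_shifted_projs[simp]: "length (shifted_projs k n) = n" by (simp add: shifted_projs_def)

lemma map_shifted_projs:
  "length xs = n \<Longrightarrow> map (\<lambda>g. prim_val g (ys @ xs)) (shifted_projs (length ys) n) = xs"
  by (auto simp: shifted_projs_def intro!: nth_equalityI simp: nth_append)

lemma map_shifted_projs0:
  "length xs = n \<Longrightarrow> map (\<lambda>g. prim_val g xs) (shifted_projs 0 n) = xs"
  using map_shifted_projs[of xs n "[]"] by simp

lemma map_shifted_projs1:
  "length xs = n \<Longrightarrow> map (\<lambda>g. prim_val g (a # xs)) (shifted_projs (Suc 0) n) = xs"
  using map_shifted_projs[of xs n "[a]"] by simp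

lemma map_shifted_projs2:
  "length xs = n \<Longrightarrow> map (\<lambda>g. prim_val g (a # b # xs)) (shifted_projs (Suc (Suc 0)) n) = xs"
  using map_shifted_projs[of xs n "[a,b]"] by (simp add: numeral_2_eq_2)
lemma prim_code_shifted_projs:
  "g \<in> set (shifted_projs k n) \<Longrightarrow> m \<ge> n + k \<Longrightarrow> prim_code g m"
  by (auto simp: shifted_projs_def)

definition BSUM :: "nat \<Rightarrow> recf \<Rightarrow> recf \<Rightarrow> recf" where
  "BSUM n b p = Comp (Prim Zero (ADD (Proj 1) (Comp p (Proj 0 # shifted_projs (Suc (Suc 0)) n)))) (b # shifted_projs 0 n)"

lemma BSUM: assumes "length xs = n"
  shows "prim_val (BSUM n b p) xs = (\<Sum>j<prim_val b xs. prim_val p (j # xs))"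
proof -
  have "prim_val (Prim Zero (ADD (Proj 1) (Comp p (Proj 0 # shifted_projs (Suc (Suc 0)) n)))) (k # xs) = (\<Sum>j<k. prim_val p (j # xs))" for k
    by (induction k) (auto simp: prim_val_Prim_Cons map_shifted_projs2 assms)
  then show ?thesis by (simp add: BSUM_def map_shifted_projs0 assms)
qed

lemma prim_code_BSUM:
  "prim_code b n \<Longrightarrow> prim_code p (Suc n) \<Longrightarrow> prim_code (BSUM n b p) n"
  by (auto simp: BSUM_def intro: prim_code_shifted_projs)

definition "BEX n b p = SG (BSUM n b p)"
lemma BEX:
  "length xs = n \<Longrightarrow> prim_val (BEX n b p) xs = (if \<exists>j<prim_val b xs. prim_val p (j # xs) \<noteq> 0 then 1 else 0)"
  by (auto simp: BEX_def BSUM)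
lemma prim_code_BEX:
  "prim_code b n \<Longrightarrow> prim_code p (Suc n) \<Longrightarrow> prim_code (BEX n b p) n"
  by (auto simp: BEX_def prim_code_BSUM)

definition "BALL n b p = NSG (BSUM n b (NSG p))"
lemma BALL:
  "length xs = n \<Longrightarrow> prim_val (BALL n b p) xs = (if \<forall>j<prim_val b xs. prim_val p (j # xs) \<noteq> 0 then 1 else 0)"
  by (auto simp: BALL_def BSUM)
lemma prim_code_BALL:
  "prim_code b n \<Longrightarrow> prim_code p (Suc n) \<Longrightarrow> prim_code (BALL n b p) n"
  by (auto simp: BALL_def prim_code_BSUM)

definition BMIN :: "nat \<Rightarrow> recf \<Rightarrow> recf \<Rightarrow> recf" where
  "BMIN n b p = Comp (Prim Zero (IF (LT (Proj 1) (Proj 0)) (Proj 1)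
      (IF (Comp p (Proj 0 # shifted_projs (Suc (Suc 0)) n)) (Proj 0) (SUC (Proj 0))))) (b # shifted_projs 0 n)"

lemma BMIN: assumes "length xs = n"
  shows "prim_val (BMIN n b p) xs = (if \<exists>j<prim_val b xs. prim_val p (j # xs) \<noteq> 0
     then (LEAST j. prim_val p (j # xs) \<noteq> 0) else prim_val b xs)"
proof -
  let ?P = "\<lambda>j. prim_val p (j # xs) \<noteq> 0"
  have "prim_val (Prim Zero (IF (LT (Proj 1) (Proj 0)) (Proj 1)
      (IF (Comp p (Proj 0 # shifted_projs (Suc (Suc 0)) n)) (Proj 0) (SUC (Proj 0))))) (k # xs) =
     (if \<exists>j<k. ?P j then (LEAST j. ?P j) else k)" for k
  proof (induction k)
    case 0 then show ?case by (simp add: prim_val_Prim_Cons)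
  next
    case (Suc k)
    show ?case
    proof (cases "\<exists>j<k. ?P j")
      case True
      then have "(LEAST j. ?P j) < k" by (meson Least_le order.strict_trans1)
      moreover have "\<exists>j<Suc k. ?P j" using True less_Suc_eq by blast
      ultimately show ?thesis using Suc True by (simp add: prim_val_Prim_Cons)
    next
      case False
      then have "?P k \<Longrightarrow> (LEAST j. ?P j) = k"
        by (metis (mono_tags, lifting) LeastI_ex linorder_neqE_nat not_less_Least)
      then show ?thesis using Suc False
        by (auto simp: prim_val_Prim_Cons map_shifted_projs2 assms less_Suc_eq)
    qed
  qed
  then show ?thesis by (simp add: BMIN_def map_shifted_projs0 assms)
qed

lemma prim_code_BMIN:
  "prim_code b n \<Longrightarrow> prim_code p (Suc n) \<Longrightarrow> prim_code (BMIN n b p) n"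
  by (auto simp: BMIN_def intro: prim_code_shifted_projs)

definition "r_iter h = Prim (Proj 0) (Comp h [Proj 1])"
lemma r_iter: "prim_val (r_iter h) [k, x] = ((\<lambda>v. prim_val h [v]) ^^ k) x"
  by (induction k) (auto simp: r_iter_def prim_val_Prim_Cons)
lemma prim_code_r_iter: "prim_code h 1 \<Longrightarrow> prim_code (r_iter h) 2"
  by (auto simp: r_iter_def)

definition "LIFT n g = Comp g (shifted_projs (Suc 0) n)"
lemma LIFT[simp]: "length xs = n \<Longrightarrow> prim_val (LIFT n g) (k # xs) = prim_val g xs"
  by (simp add: LIFT_def map_shifted_projs1)
lemma prim_code_LIFT[simp]: "prim_code g n \<Longrightarrow> prim_code (LIFT n g) (Suc n)"
  by (auto simp: LIFT_def intro: prim_code_shifted_projs)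

definition pfst :: "nat \<Rightarrow> nat" where "pfst p = fst (prod_decode p)"

definition psnd :: "nat \<Rightarrow> nat" where "psnd p = snd (prod_decode p)"

definition pair :: "nat \<Rightarrow> nat \<Rightarrow> nat" where "pair a b = prod_encode (a, b)"

lemma pfst_pair[simp]: "pfst (pair a b) = a" and psnd_pair[simp]: "psnd (pair a b) = b"
  by (simp_all add: pfst_def psnd_def pair_def)

lemma pfst_prod_encode[simp]: "pfst (prod_encode (a, b)) = a"
  and psnd_prod_encode[simp]: "psnd (prod_encode (a, b)) = b"
  by (simp_all add: pfst_def psnd_def)

lemma pair_pfst_psnd[simp]: "pair (pfst p) (psnd p) = p"
  by (simp add: pfst_def psnd_def pair_def)

lemma pair_eq[simp]: "pair a b = pair c d \<longleftrightarrow> a = c \<and> b = d"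
  by (simp add: pair_def)

lemma psnd_le: "psnd p \<le> p"
  using le_prod_encode_2[of "snd (prod_decode p)" "fst (prod_decode p)"] by (simp add: psnd_def)

lemma pfst_le: "pfst p \<le> p"
  using le_prod_encode_1[of "fst (prod_decode p)" "snd (prod_decode p)"] by (simp add: pfst_def)

lemma triangle_mono: "m \<le> n \<Longrightarrow> triangle m \<le> triangle n"
  by (induction n) (auto simp: le_Suc_eq)

lemma le_triangle: "n \<le> triangle n"
  by (induction n) auto

lemma triangle_pfst_psnd: "p = triangle (pfst p + psnd p) + pfst p"
proof -
  have "p = prod_encode (pfst p, psnd p)" by (simp add: pfst_def psnd_def)
  then show ?thesis by (simp add: prod_encode_def)
qed

lemma psnd_less: "pfst p \<noteq> 0 \<Longrightarrow> psnd p < p"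
proof -
  assume "pfst p \<noteq> 0"
  have "p = triangle (pfst p + psnd p) + pfst p" by (rule triangle_pfst_psnd)
  moreover have "psnd p \<le> triangle (pfst p + psnd p)"
    using le_triangle[of "pfst p + psnd p"] by linarith
  ultimately show ?thesis using \<open>pfst p \<noteq> 0\<close> by linarith
qed

definition "hd_code x = pfst (x - 1)"
definition "tl_code x = psnd (x - 1)"
definition "cons_code a l = Suc (pair a l)"

lemma list_decode_nonzero:
  "x \<noteq> 0 \<Longrightarrow> list_decode x = hd_code x # list_decode (tl_code x)"
  by (cases x) (auto simp: hd_code_def tl_code_def pfst_def psnd_def split: prod.split)

lemma list_decode_cons_code[simp]: "list_decode (cons_code a l) = a # list_decode l"
  by (simp add: cons_code_def pair_def)

lemma list_encode_Cons_code: "list_encode (a # xs) = cons_code a (list_encode xs)"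
  by (simp add: cons_code_def pair_def)

lemma cons_code_nonzero[simp]: "cons_code a l \<noteq> 0" by (simp add: cons_code_def)

lemma hd_code_cons_code[simp]: "hd_code (cons_code a l) = a"
  and tl_code_cons_code[simp]: "tl_code (cons_code a l) = l"
  by (simp_all add: hd_code_def tl_code_def cons_code_def)

lemma list_decode_less: "x \<in> set (list_decode n) \<Longrightarrow> x < n"
proof (induction n rule: list_decode.induct)
  case 1 then show ?case by simp
next
  case (2 n)
  obtain a b where ab: "prod_decode n = (a, b)" by fastforce
  then have "n = prod_encode (a, b)" by (metis prod_decode_inverse)
  then have "a \<le> n" "b \<le> n" using le_prod_encode_1 le_prod_encode_2 by auto
  with 2 ab show ?case by auto
qed

definition "len_code x = length (list_decode x)"
definition "nth_code x j = hd_code ((tl_code ^^ j) x)"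

lemma psnd_0: "psnd 0 = 0"
proof -
  have "pair 0 0 = 0" by (simp add: pair_def prod_encode_def)
  then show ?thesis using psnd_pair[of 0 0] by simp
qed

lemma tl_code_list_encode:
  "tl_code (list_encode (a # xs)) = list_encode xs"
  "tl_code (list_encode []) = list_encode []"
  by (simp_all add: list_encode_Cons_code tl_code_def psnd_0)

lemma tl_code_pow_list_encode: "(tl_code ^^ j) (list_encode xs) = list_encode (drop j xs)"
proof (induction j arbitrary: xs)
  case 0 then show ?case by simp
next
  case (Suc j)
  have e: "(tl_code ^^ Suc j) (list_encode xs) = (tl_code ^^ j) (tl_code (list_encode xs))"
    by (simp only: funpow_Suc_right o_apply)
  show ?case
  proof (cases xs)
    case Nil then show ?thesis using e Suc[of "[]"] tl_code_list_encode(2) by simp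
  next
    case (Cons a ys) then show ?thesis using e Suc[of ys] tl_code_list_encode(1)[of a ys] by simp
  qed
qed

lemma nth_code_list_encode: "j < length xs \<Longrightarrow> nth_code (list_encode xs) j = xs ! j"
  by (simp add: nth_code_def tl_code_pow_list_encode Cons_nth_drop_Suc[symmetric] hd_code_def)

lemma nth_code_eq_nth: "j < len_code x \<Longrightarrow> nth_code x j = list_decode x ! j"
  using nth_code_list_encode[of j "list_decode x"] by (simp add: len_code_def)

definition "r_tri = Prim Zero (ADD (Proj 1) (SUC (Proj 0)))"
lemma r_tri[simp]: "prim_val r_tri [k] = triangle k" "prim_code r_tri (Suc 0)"
  by (induction k) (auto simp: r_tri_def prim_val_Prim_Cons)

definition "r_diag = BMIN (Suc 0) (SUC (Proj 0)) (LT (Proj 1) (Comp r_tri [SUC (Proj 0)]))"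
lemma r_diag[simp]: "prim_val r_diag [p] = pfst p + psnd p" "prim_code r_diag (Suc 0)"
proof -
  let ?a = "pfst p" and ?b = "psnd p"
  have p: "p = triangle (?a + ?b) + ?a" by (rule triangle_pfst_psnd)
  have bound: "\<exists>j<Suc p. p < triangle (Suc j)"
  proof (intro exI conjI)
    show "?a + ?b < Suc p" using le_triangle[of "?a + ?b"] p by linarith
    show "p < triangle (Suc (?a + ?b))" using p by simp
  qed
  have least: "(LEAST j. p < triangle (Suc j)) = ?a + ?b"
  proof (rule Least_equality)
    show "p < triangle (Suc (?a + ?b))" using p by simp
    fix j assume "p < triangle (Suc j)"
    show "?a + ?b \<le> j"
    proof (rule ccontr)
      assume "\<not> ?a + ?b \<le> j"
      then have "triangle (Suc j) \<le> triangle (?a + ?b)" by (intro triangle_mono) simp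
      then show False using \<open>p < triangle (Suc j)\<close> p by linarith
    qed
  qed
  show "prim_val r_diag [p] = pfst p + psnd p"
    unfolding r_diag_def by (subst BMIN) (use bound least in auto)
  show "prim_code r_diag (Suc 0)" unfolding r_diag_def by (rule prim_code_BMIN) auto
qed

definition "r_pfst = SUB (Proj 0) (Comp r_tri [r_diag])"
lemma r_pfst[simp]: "prim_val r_pfst [p] = pfst p" "prim_code r_pfst (Suc 0)"
  using triangle_pfst_psnd[of p] by (auto simp: r_pfst_def)

definition "r_psnd = SUB r_diag r_pfst"
lemma r_psnd[simp]: "prim_val r_psnd [p] = psnd p" "prim_code r_psnd (Suc 0)"
  by (auto simp: r_psnd_def)

definition "PFST g = Comp r_pfst [g]"
definition "PSND g = Comp r_psnd [g]"
definition "PAIR g h = ADD (Comp r_tri [ADD g h]) g"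

lemma PFST[simp]:
  "prim_val (PFST g) xs = pfst (prim_val g xs)"
  "prim_code (PFST g) n = prim_code g n"
  by (auto simp: PFST_def)

lemma PSND[simp]:
  "prim_val (PSND g) xs = psnd (prim_val g xs)"
  "prim_code (PSND g) n = prim_code g n"
  by (auto simp: PSND_def)
lemma PAIR[simp]:
  "prim_val (PAIR g h) xs = pair (prim_val g xs) (prim_val h xs)"
  "prim_code (PAIR g h) n = (prim_code g n \<and> prim_code h n)"
  by (auto simp: PAIR_def pair_def prod_encode_def)

definition "HD g = PFST (SUB g (NUM 1))"
definition "TL g = PSND (SUB g (NUM 1))"
definition "CONS g h = SUC (PAIR g h)"

lemma HD[simp]:
  "prim_val (HD g) xs = hd_code (prim_val g xs)"
  "prim_code (HD g) n = prim_code g n"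
  by (auto simp: HD_def hd_code_def)

lemma TL[simp]:
  "prim_val (TL g) xs = tl_code (prim_val g xs)"
  "prim_code (TL g) n = prim_code g n"
  by (auto simp: TL_def tl_code_def)
lemma CONS[simp]:
  "prim_val (CONS g h) xs = cons_code (prim_val g xs) (prim_val h xs)"
  "prim_code (CONS g h) n = (prim_code g n \<and> prim_code h n)"
  by (auto simp: CONS_def cons_code_def)

definition "r_tl_pow = r_iter (TL (Proj 0))"
lemma r_tl_pow[simp]:
  "prim_val r_tl_pow [j, l] = (tl_code ^^ j) l"
  "prim_code r_tl_pow (Suc (Suc 0))"
proof -
  have "(\<lambda>v. prim_val (TL (Proj 0)) [v]) = tl_code" by auto
  then show "prim_val r_tl_pow [j, l] = (tl_code ^^ j) l" by (simp add: r_tl_pow_def r_iter)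
  show "prim_code r_tl_pow (Suc (Suc 0))" unfolding r_tl_pow_def using prim_code_r_iter[of "TL (Proj 0)"]
    by (simp add: numeral_2_eq_2)
qed

definition "NTH l j = HD (Comp r_tl_pow [j, l])"
lemma NTH[simp]:
  "prim_val (NTH l j) xs = nth_code (prim_val l xs) (prim_val j xs)"
  "prim_code (NTH l j) n = (prim_code l n \<and> prim_code j n)"
  by (auto simp: NTH_def nth_code_def)

lemma length_le_list_encode: "length xs \<le> list_encode xs"
proof (induction xs)
  case Nil then show ?case by simp
next
  case (Cons a xs) then show ?case using le_prod_encode_2[of "list_encode xs" a]
    by (simp add: list_encode_Cons_code cons_code_def pair_def)
qed

definition "r_len = BMIN (Suc 0) (SUC (Proj 0)) (EQ (Comp r_tl_pow [Proj 0, Proj 1]) Zero)"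
lemma r_len[simp]: "prim_val r_len [l] = len_code l" "prim_code r_len (Suc 0)"
proof -
  define xs where "xs = list_decode l"
  have l: "l = list_encode xs" by (simp add: xs_def)
  have z: "(tl_code ^^ j) l = 0 \<longleftrightarrow> length xs \<le> j" for j
    using l tl_code_pow_list_encode[of j xs] list_encode_eq[of "drop j xs" "[]"] by simp
  have bound: "\<exists>j<Suc l. (tl_code ^^ j) l = 0" using z length_le_list_encode[of xs] l by (intro exI[of _ "length xs"]) auto
  have least: "(LEAST j. (tl_code ^^ j) l = 0) = length xs"
    by (rule Least_equality) (use z in auto)
  show "prim_val r_len [l] = len_code l"
    unfolding r_len_def by (subst BMIN) (use bound least in \<open>auto simp: len_code_def xs_def\<close>)
  show "prim_code r_len (Suc 0)" unfolding r_len_def by (rule prim_code_BMIN) auto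
qed

definition "LEN g = Comp r_len [g]"
lemma LEN[simp]:
  "prim_val (LEN g) xs = len_code (prim_val g xs)"
  "prim_code (LEN g) n = prim_code g n"
  by (auto simp: LEN_def)

fun recf_encode :: "recf \<Rightarrow> nat" where
  "recf_encode Zero = pair 0 0"
| "recf_encode Succ = pair 1 0"
| "recf_encode (Proj i) = pair 2 i"
| "recf_encode (Comp f gs) = pair 3 (pair (recf_encode f) (list_encode (map recf_encode gs)))"
| "recf_encode (Prim f g) = pair 4 (pair (recf_encode f) (recf_encode g))"
| "recf_encode (Mn f) = pair 5 (recf_encode f)"

lemma pfst_psnd_less: "pfst c \<noteq> 0 \<Longrightarrow> pfst (psnd c) < c"
  using pfst_le[of "psnd c"] psnd_less[of c] by simp

lemma psnd_psnd_less: "pfst c \<noteq> 0 \<Longrightarrow> psnd (psnd c) < c"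
  using psnd_le[of "psnd c"] psnd_less[of c] by simp

lemma list_decode_psnd_psnd_less:
  "pfst c \<noteq> 0 \<Longrightarrow> x \<in> set (list_decode (psnd (psnd c))) \<Longrightarrow> x < c"
  using list_decode_less[of x "psnd (psnd c)"] psnd_psnd_less[of c] by simp

function recf_decode :: "nat \<Rightarrow> recf" where
  "recf_decode c = (if pfst c = 0 then Zero else if pfst c = 1 then Succ else if pfst c = 2 then Proj (psnd c)
     else if pfst c = 3 then Comp (recf_decode (pfst (psnd c))) (map recf_decode (list_decode (psnd (psnd c))))
     else if pfst c = 4 then Prim (recf_decode (pfst (psnd c))) (recf_decode (psnd (psnd c)))
     else if pfst c = 5 then Mn (recf_decode (psnd c)) else Zero)"
  by pat_completeness auto
termination
  by (relation "measure id") (auto intro: pfst_psnd_less psnd_psnd_less list_decode_psnd_psnd_less psnd_less)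

declare recf_decode.simps[simp del]

lemma recf_decode_cases:
  "pfst c = 0 \<Longrightarrow> recf_decode c = Zero"
  "pfst c = 1 \<Longrightarrow> recf_decode c = Succ"
  "pfst c = 2 \<Longrightarrow> recf_decode c = Proj (psnd c)"
  "pfst c = 3 \<Longrightarrow> recf_decode c = Comp (recf_decode (pfst (psnd c))) (map recf_decode (list_decode (psnd (psnd c))))"
  "pfst c = 4 \<Longrightarrow> recf_decode c = Prim (recf_decode (pfst (psnd c))) (recf_decode (psnd (psnd c)))"
  "pfst c = 5 \<Longrightarrow> recf_decode c = Mn (recf_decode (psnd c))"
  by (subst recf_decode.simps; simp)+

lemma recf_decode_encode[simp]: "recf_decode (recf_encode r) = r"
  by (induction r) (subst recf_decode.simps; simp add: map_idI)+

section \<open>Derivations\<close>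

text \<open>An entry \<open>entry c x y w\<close> of a derivation records that the program coded \<open>c\<close> maps the
  argument list coded \<open>x\<close> to \<open>y\<close>. The witness \<open>w\<close> codes the list of intermediate values for a
  composition and the previous value for a recursion step. The disjuncts of \<open>justifies\<close> are the
  rules of \<open>eval\<close>, with premises looked up among the entries before position \<open>i\<close>.\<close>

definition "ent_code q = pfst q"
definition "ent_args q = pfst (psnd q)"
definition "ent_val q = pfst (psnd (psnd q))"
definition "ent_wit q = psnd (psnd (psnd q))"
definition "entry c x y w = pair c (pair x (pair y w))"

lemma entry_simps[simp]:
  "ent_code (entry c x y w) = c"
  "ent_args (entry c x y w) = x"
  "ent_val (entry c x y w) = y"
  "ent_wit (entry c x y w) = w"
  by (simp_all add: ent_code_def ent_args_def ent_val_def ent_wit_def entry_def)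

definition "derived_before L i c x y \<longleftrightarrow> (\<exists>k<i. ent_code (L!k) = c \<and> ent_args (L!k) = x \<and> ent_val (L!k) = y)"
definition "derived_pos_before L i c x \<longleftrightarrow> (\<exists>k<i. ent_code (L!k) = c \<and> ent_args (L!k) = x \<and> 0 < ent_val (L!k))"

definition justifies :: "nat list \<Rightarrow> nat \<Rightarrow> nat \<Rightarrow> nat \<Rightarrow> nat \<Rightarrow> nat \<Rightarrow> bool" where
  "justifies L i c x y w \<longleftrightarrow>
     (pfst c = 0 \<and> y = 0) \<or>
     (pfst c = 1 \<and> x \<noteq> 0 \<and> y = Suc (hd_code x)) \<or>
     (pfst c = 2 \<and> psnd c < len_code x \<and> y = nth_code x (psnd c)) \<or>
     (pfst c = 3 \<and> len_code w = len_code (psnd (psnd c)) \<and>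
       (\<forall>j<len_code (psnd (psnd c)). derived_before L i (nth_code (psnd (psnd c)) j) x (nth_code w j)) \<and>
       derived_before L i (pfst (psnd c)) w y) \<or>
     (pfst c = 4 \<and> x \<noteq> 0 \<and> hd_code x = 0 \<and> derived_before L i (pfst (psnd c)) (tl_code x) y) \<or>
     (pfst c = 4 \<and> x \<noteq> 0 \<and> hd_code x \<noteq> 0 \<and>
       derived_before L i c (cons_code (hd_code x - 1) (tl_code x)) w \<and>
       derived_before L i (psnd (psnd c)) (cons_code (hd_code x - 1) (cons_code w (tl_code x))) y) \<or>
     (pfst c = 5 \<and> derived_before L i (psnd c) (cons_code y x) 0 \<and>
       (\<forall>m<y. derived_pos_before L i (psnd c) (cons_code m x)))"

definition "justified L i \<longleftrightarrow> justifies L i (ent_code (L!i)) (ent_args (L!i)) (ent_val (L!i)) (ent_wit (L!i))"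
definition "derivation L \<longleftrightarrow> (\<forall>i<length L. justified L i)"

lemma justifies_sound:
  assumes just: "justifies L i c x y w"
    and before: "\<And>c x y. derived_before L i c x y \<Longrightarrow> eval (recf_decode c) (list_decode x) y"
  shows "eval (recf_decode c) (list_decode x) y"
  using just unfolding justifies_def
proof (elim disjE conjE)
  assume "pfst c = 0" "y = 0" then show ?thesis by (simp add: recf_decode_cases eval.zero)
next
  assume "pfst c = 1" "x \<noteq> 0" "y = Suc (hd_code x)"
  then show ?thesis by (simp add: recf_decode_cases list_decode_nonzero eval.succ)
next
  assume "pfst c = 2" "psnd c < len_code x" "y = nth_code x (psnd c)"
  then show ?thesis by (simp add: recf_decode_cases nth_code_eq_nth) (simp add: len_code_def eval.proj)
next
  assume comp: "pfst c = 3" "len_code w = len_code (psnd (psnd c))"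
    "\<forall>j<len_code (psnd (psnd c)). derived_before L i (nth_code (psnd (psnd c)) j) x (nth_code w j)"
    "derived_before L i (pfst (psnd c)) w y"
  have "list_all2 (\<lambda>g y. eval g (list_decode x) y) (map recf_decode (list_decode (psnd (psnd c)))) (list_decode w)"
    using comp(2,3) before by (auto simp: list_all2_conv_all_nth nth_code_eq_nth) (auto simp: len_code_def)
  moreover have "eval (recf_decode (pfst (psnd c))) (list_decode w) y" using comp(4) before by blast
  ultimately show ?thesis using comp(1) by (simp add: recf_decode_cases eval.comp)
next
  assume prim0: "pfst c = 4" "x \<noteq> 0" "hd_code x = 0" "derived_before L i (pfst (psnd c)) (tl_code x) y"
  then show ?thesis using before[OF prim0(4)] by (simp add: recf_decode_cases list_decode_nonzero eval.prim0)
next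
  assume primS: "pfst c = 4" "x \<noteq> 0" "hd_code x \<noteq> 0" "derived_before L i c (cons_code (hd_code x - 1) (tl_code x)) w"
    "derived_before L i (psnd (psnd c)) (cons_code (hd_code x - 1) (cons_code w (tl_code x))) y"
  have prev: "eval (Prim (recf_decode (pfst (psnd c))) (recf_decode (psnd (psnd c)))) ((hd_code x - 1) # list_decode (tl_code x)) w"
    using before[OF primS(4)] primS(1) by (simp add: recf_decode_cases)
  have step: "eval (recf_decode (psnd (psnd c))) ((hd_code x - 1) # w # list_decode (tl_code x)) y"
    using before[OF primS(5)] by simp
  have "list_decode x = Suc (hd_code x - 1) # list_decode (tl_code x)" using primS(2,3) by (simp add: list_decode_nonzero)
  then show ?thesis using eval.primS[OF prev step] primS(1) by (simp add: recf_decode_cases)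
next
  assume mn: "pfst c = 5" "derived_before L i (psnd c) (cons_code y x) 0" "\<forall>m<y. derived_pos_before L i (psnd c) (cons_code m x)"
  have zero: "eval (recf_decode (psnd c)) (y # list_decode x) 0" using before[OF mn(2)] by simp
  have "\<exists>z. eval (recf_decode (psnd c)) (m # list_decode x) (Suc z)" if "m < y" for m
  proof -
    obtain k where "k < i" "ent_code (L!k) = psnd c" "ent_args (L!k) = cons_code m x" "0 < ent_val (L!k)"
      using mn(3) \<open>m < y\<close> by (auto simp: derived_pos_before_def)
    then have "eval (recf_decode (psnd c)) (m # list_decode x) (Suc (ent_val (L!k) - 1))"
      using before[of "psnd c" "cons_code m x" "ent_val (L!k)"] by (auto simp: derived_before_def)
    then show ?thesis by blast
  qed
  then show ?thesis using eval.mn[OF zero] mn(1) by (simp add: recf_decode_cases)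
qed

lemma derivation_entries_sound:
  assumes "derivation L" and "i < length L"
  shows "eval (recf_decode (ent_code (L!i))) (list_decode (ent_args (L!i))) (ent_val (L!i))"
  using assms(2)
proof (induction i rule: less_induct)
  case (less i)
  have "justified L i" using assms(1) less.prems by (simp add: derivation_def)
  then show ?case unfolding justified_def
    by (rule justifies_sound) (use less in \<open>auto simp: derived_before_def\<close>)
qed

abbreviation "derived L c x y \<equiv> derived_before L (length L) c x y"

lemma derived_before_append:
  "derived_before L i c x y \<Longrightarrow> i \<le> length L \<Longrightarrow> derived_before (L @ M) i c x y"
proof -
  assume "derived_before L i c x y" "i \<le> length L"
  then obtain k where "k < i" "k < length L" "ent_code (L!k) = c \<and> ent_args (L!k) = x \<and> ent_val (L!k) = y" by (auto simp: derived_before_def)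
  then show ?thesis unfolding derived_before_def by (intro exI[of _ k]) (simp add: nth_append)
qed

lemma derived_before_prepend:
  "derived_before M i c x y \<Longrightarrow> derived_before (L @ M) (length L + i) c x y"
proof -
  assume "derived_before M i c x y"
  then obtain k where "k < i" "ent_code (M!k) = c \<and> ent_args (M!k) = x \<and> ent_val (M!k) = y" by (auto simp: derived_before_def)
  then show ?thesis unfolding derived_before_def by (intro exI[of _ "length L + k"]) simp
qed

lemma derived_pos_before_append:
  "derived_pos_before L i c x \<Longrightarrow> i \<le> length L \<Longrightarrow> derived_pos_before (L @ M) i c x"
proof -
  assume "derived_pos_before L i c x" "i \<le> length L"
  then obtain k where "k < i" "k < length L" "ent_code (L!k) = c \<and> ent_args (L!k) = x \<and> 0 < ent_val (L!k)" by (auto simp: derived_pos_before_def)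
  then show ?thesis unfolding derived_pos_before_def by (intro exI[of _ k]) (simp add: nth_append)
qed

lemma derived_pos_before_prepend:
  "derived_pos_before M i c x \<Longrightarrow> derived_pos_before (L @ M) (length L + i) c x"
proof -
  assume "derived_pos_before M i c x"
  then obtain k where "k < i" "ent_code (M!k) = c \<and> ent_args (M!k) = x \<and> 0 < ent_val (M!k)" by (auto simp: derived_pos_before_def)
  then show ?thesis unfolding derived_pos_before_def by (intro exI[of _ "length L + k"]) simp
qed

lemma derived_before_append_length:
  "derived_before (L @ M) (length L) c x y = derived_before L (length L) c x y"
  by (auto simp: derived_before_def nth_append)

lemma derived_pos_before_append_length:
  "derived_pos_before (L @ M) (length L) c x = derived_pos_before L (length L) c x"
  by (auto simp: derived_pos_before_def nth_append)

lemma justifies_append: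
  "justifies L i c x y w \<Longrightarrow> i \<le> length L \<Longrightarrow> justifies (L @ M) i c x y w"
  unfolding justifies_def by (elim disjE conjE) (simp_all add: derived_before_append derived_pos_before_append)

lemma justifies_prepend: "justifies M i c x y w \<Longrightarrow> justifies (L @ M) (length L + i) c x y w"
  unfolding justifies_def by (elim disjE conjE) (simp_all add: derived_before_prepend derived_pos_before_prepend)

lemma derivation_append: "derivation L \<Longrightarrow> derivation M \<Longrightarrow> derivation (L @ M)"
  unfolding derivation_def justified_def
proof (intro allI impI)
  fix i assume vL: "\<forall>i<length L. justifies L i (ent_code (L ! i)) (ent_args (L ! i)) (ent_val (L ! i)) (ent_wit (L ! i))"
    and vM: "\<forall>i<length M. justifies M i (ent_code (M ! i)) (ent_args (M ! i)) (ent_val (M ! i)) (ent_wit (M ! i))"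
    and i: "i < length (L @ M)"
  show "justifies (L @ M) i (ent_code ((L @ M) ! i)) (ent_args ((L @ M) ! i)) (ent_val ((L @ M) ! i)) (ent_wit ((L @ M) ! i))"
  proof (cases "i < length L")
    case True then show ?thesis using vL justifies_append by (simp add: nth_append)
  next
    case False
    then obtain j where j: "i = length L + j" "j < length M" using i
      by (metis add_diff_inverse_nat length_append nat_add_left_cancel_less)
    then show ?thesis using vM justifies_prepend by (simp add: nth_append)
  qed
qed

lemma derivation_snoc:
  "derivation L \<Longrightarrow> justifies L (length L) c x y w \<Longrightarrow> derivation (L @ [entry c x y w])"
proof -
  assume v: "derivation L" and j: "justifies L (length L) c x y w"
  have "justifies (L @ [entry c x y w]) (length L) c x y w"
    using j unfolding justifies_def derived_before_append_length derived_pos_before_append_length .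
  then show ?thesis using v unfolding derivation_def justified_def
    by (auto simp: nth_append less_Suc_eq justifies_append)
qed

lemma derived_snoc: "derived (L @ [entry c x y w]) c x y"
  by (auto simp: derived_before_def)

lemma derived_append1: "derived L c x y \<Longrightarrow> derived (L @ M) c x y"
  by (auto simp: derived_before_def nth_append intro: trans_less_add1)

lemma derived_append2: "derived M c x y \<Longrightarrow> derived (L @ M) c x y"
  using derived_before_prepend[of M "length M" c x y L] by simp

lemma derived_Suc_imp_pos: "derived L c x (Suc y) \<Longrightarrow> derived_pos_before L (length L) c x"
  by (auto simp: derived_before_def derived_pos_before_def)

lemma derivation_combine:
  fixes n :: nat and Q :: "nat \<Rightarrow> nat list \<Rightarrow> bool"
  assumes mono: "\<And>j L M. Q j L \<Longrightarrow> Q j (L @ M) \<and> Q j (M @ L)"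
    and each: "\<forall>j<n. \<exists>L. derivation L \<and> Q j L"
  shows "\<exists>L. derivation L \<and> (\<forall>j<n. Q j L)"
  using each
proof (induction n)
  case 0 then show ?case by (auto intro!: exI[of _ "[]"] simp: derivation_def)
next
  case (Suc n)
  then obtain L where L: "derivation L" "\<forall>j<n. Q j L" by auto
  obtain M where M: "derivation M" "Q n M" using Suc.prems by auto
  have "derivation (L @ M)" using L M derivation_append by blast
  moreover have "\<forall>j<Suc n. Q j (L @ M)" using L M mono by (auto simp: less_Suc_eq)
  ultimately show ?case by blast
qed

declare list_encode.simps(2)[simp del] list_encode_Cons_code[simp]

lemma len_code_list_encode[simp]: "len_code (list_encode xs) = length xs"
  by (simp add: len_code_def)

declare nth_code_list_encode[simp]

lemma derivation_extend:
  assumes "derivation L" and "justifies L (length L) c x y w"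
  shows "\<exists>L'. derivation L' \<and> derived L' c x y"
  using derivation_snoc[OF assms] derived_snoc by blast

lemma eval_imp_derivation:
  "eval r xs y \<Longrightarrow> \<exists>L. derivation L \<and> derived L (recf_encode r) (list_encode xs) y"
proof (induction r xs y rule: eval.induct)
  case (zero xs)
  show ?case by (rule derivation_extend[where L="[]" and w=0]) (auto simp: derivation_def justifies_def)
next
  case (succ x xs)
  show ?case by (rule derivation_extend[where L="[]" and w=0]) (auto simp: derivation_def justifies_def)
next
  case (proj i xs)
  show ?case by (rule derivation_extend[where L="[]" and w=0]) (use proj in \<open>auto simp: derivation_def justifies_def\<close>)
next
  case (comp xs gs ys f z)
  have "\<exists>L. derivation L \<and> (\<forall>j<length gs. derived L (recf_encode (gs ! j)) (list_encode xs) (ys ! j))"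
    by (rule derivation_combine) (use comp(1) derived_append1 derived_append2 in \<open>auto simp: list_all2_conv_all_nth\<close>)
  then obtain L1 where L1: "derivation L1" "\<forall>j<length gs. derived L1 (recf_encode (gs ! j)) (list_encode xs) (ys ! j)"
    by blast
  obtain L2 where L2: "derivation L2" "derived L2 (recf_encode f) (list_encode ys) z" using comp(2) by blast
  have "\<forall>j<length gs. derived (L1 @ L2) (recf_encode (gs ! j)) (list_encode xs) (ys ! j)"
    using L1(2) derived_append1 by blast
  moreover have "derived (L1 @ L2) (recf_encode f) (list_encode ys) z" using L2(2) by (rule derived_append2)
  moreover have "length ys = length gs" using list_all2_lengthD[OF comp(1)] by simp
  ultimately have "justifies (L1 @ L2) (length (L1 @ L2)) (recf_encode (Comp f gs)) (list_encode xs) z (list_encode ys)"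
    by (auto simp: justifies_def)
  then show ?case using derivation_extend derivation_append[OF L1(1) L2(1)] by blast
next
  case (prim0 f xs y g)
  then obtain L where L: "derivation L" "derived L (recf_encode f) (list_encode xs) y" by blast
  show ?case by (rule derivation_extend[OF L(1), where w=0]) (use L in \<open>auto simp: justifies_def\<close>)
next
  case (primS f g n xs y z)
  obtain L1 where L1: "derivation L1" "derived L1 (recf_encode (Prim f g)) (list_encode (n # xs)) y" using primS by blast
  obtain L2 where L2: "derivation L2" "derived L2 (recf_encode g) (list_encode (n # y # xs)) z" using primS by blast
  have "derived (L1 @ L2) (recf_encode (Prim f g)) (list_encode (n # xs)) y" using L1(2) by (rule derived_append1)
  moreover have "derived (L1 @ L2) (recf_encode g) (list_encode (n # y # xs)) z" using L2(2) by (rule derived_append2)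
  ultimately have "justifies (L1 @ L2) (length (L1 @ L2)) (recf_encode (Prim f g)) (list_encode (Suc n # xs)) z y"
    by (auto simp: justifies_def)
  then show ?case using derivation_extend derivation_append[OF L1(1) L2(1)] by blast
next
  case (mn f n xs)
  obtain L1 where L1: "derivation L1" "derived L1 (recf_encode f) (list_encode (n # xs)) 0" using mn by blast
  have "\<exists>L. derivation L \<and> (\<forall>m<n. \<exists>y. derived L (recf_encode f) (list_encode (m # xs)) (Suc y))"
  proof (rule derivation_combine)
    show "(\<exists>y. derived L (recf_encode f) (list_encode (m # xs)) (Suc y)) \<Longrightarrow>
        (\<exists>y. derived (L @ M) (recf_encode f) (list_encode (m # xs)) (Suc y)) \<and>
        (\<exists>y. derived (M @ L) (recf_encode f) (list_encode (m # xs)) (Suc y))" for m L M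
      using derived_append1 derived_append2 by blast
  qed (use mn(3) in blast)
  then obtain L2 where L2: "derivation L2" "\<forall>m<n. \<exists>y. derived L2 (recf_encode f) (list_encode (m # xs)) (Suc y)"
    by blast
  have "derived (L1 @ L2) (recf_encode f) (list_encode (n # xs)) 0" using L1(2) by (rule derived_append1)
  moreover have "\<forall>m<n. derived_pos_before (L1 @ L2) (length (L1 @ L2)) (recf_encode f) (list_encode (m # xs))"
    using L2(2) derived_append2 derived_Suc_imp_pos by blast
  ultimately have "justifies (L1 @ L2) (length (L1 @ L2)) (recf_encode (Mn f)) (list_encode xs) n 0"
    by (auto simp: justifies_def)
  then show ?case using derivation_extend derivation_append[OF L1(1) L2(1)] by blast
qed

lemma derivation_sound:
  "derivation L \<Longrightarrow> derived L (recf_encode r) (list_encode xs) y \<Longrightarrow> eval r xs y"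
  using derivation_entries_sound[of L] by (auto simp: derived_before_def) (metis recf_decode_encode list_encode_inverse)

section \<open>Checking derivations is primitive recursive\<close>

definition "ENT_CODE q = PFST q"
definition "ENT_ARGS q = PFST (PSND q)"
definition "ENT_VAL q = PFST (PSND (PSND q))"
definition "ENT_WIT q = PSND (PSND (PSND q))"

lemma ENT_CODE[simp]:
  "prim_val (ENT_CODE g) xs = ent_code (prim_val g xs)" "prim_code (ENT_CODE g) n = prim_code g n"
  by (auto simp: ENT_CODE_def ent_code_def)

lemma ENT_ARGS[simp]:
  "prim_val (ENT_ARGS g) xs = ent_args (prim_val g xs)" "prim_code (ENT_ARGS g) n = prim_code g n"
  by (auto simp: ENT_ARGS_def ent_args_def)

lemma ENT_VAL[simp]:
  "prim_val (ENT_VAL g) xs = ent_val (prim_val g xs)" "prim_code (ENT_VAL g) n = prim_code g n"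
  by (auto simp: ENT_VAL_def ent_val_def)

lemma ENT_WIT[simp]:
  "prim_val (ENT_WIT g) xs = ent_wit (prim_val g xs)" "prim_code (ENT_WIT g) n = prim_code g n"
  by (auto simp: ENT_WIT_def ent_wit_def)

definition DERIVED :: "nat \<Rightarrow> recf \<Rightarrow> recf \<Rightarrow> recf \<Rightarrow> recf \<Rightarrow> recf \<Rightarrow> recf" where
  "DERIVED n L i c x y = BEX n i (AND (EQ (ENT_CODE (NTH (LIFT n L) (Proj 0))) (LIFT n c))
     (AND (EQ (ENT_ARGS (NTH (LIFT n L) (Proj 0))) (LIFT n x))
          (EQ (ENT_VAL (NTH (LIFT n L) (Proj 0))) (LIFT n y))))"

lemma DERIVED:
  assumes "length xs = n" and "prim_val i xs \<le> len_code (prim_val L xs)"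
  shows "prim_val (DERIVED n L i c x y) xs =
    (if derived_before (list_decode (prim_val L xs)) (prim_val i xs) (prim_val c xs) (prim_val x xs) (prim_val y xs)
     then 1 else 0)"
proof -
  have e: "\<forall>j<prim_val i xs. nth_code (prim_val L xs) j = list_decode (prim_val L xs) ! j"
    using assms(2) nth_code_eq_nth by auto
  show ?thesis unfolding DERIVED_def using assms(1) e by (subst BEX) (auto simp: derived_before_def)
qed

lemma prim_code_DERIVED[simp]:
  "prim_code L n \<Longrightarrow> prim_code i n \<Longrightarrow> prim_code c n \<Longrightarrow> prim_code x n \<Longrightarrow> prim_code y n \<Longrightarrow>
    prim_code (DERIVED n L i c x y) n"
  unfolding DERIVED_def by (rule prim_code_BEX) auto

definition DERIVED_POS :: "nat \<Rightarrow> recf \<Rightarrow> recf \<Rightarrow> recf \<Rightarrow> recf \<Rightarrow> recf" where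
  "DERIVED_POS n L i c x = BEX n i (AND (EQ (ENT_CODE (NTH (LIFT n L) (Proj 0))) (LIFT n c))
     (AND (EQ (ENT_ARGS (NTH (LIFT n L) (Proj 0))) (LIFT n x))
          (LT (NUM 0) (ENT_VAL (NTH (LIFT n L) (Proj 0))))))"

lemma DERIVED_POS:
  assumes "length xs = n" and "prim_val i xs \<le> len_code (prim_val L xs)"
  shows "prim_val (DERIVED_POS n L i c x) xs =
    (if derived_pos_before (list_decode (prim_val L xs)) (prim_val i xs) (prim_val c xs) (prim_val x xs) then 1 else 0)"
proof -
  have e: "\<forall>j<prim_val i xs. nth_code (prim_val L xs) j = list_decode (prim_val L xs) ! j"
    using assms(2) nth_code_eq_nth by auto
  show ?thesis unfolding DERIVED_POS_def using assms(1) e by (subst BEX) (auto simp: derived_pos_before_def)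
qed

lemma prim_code_DERIVED_POS[simp]:
  "prim_code L n \<Longrightarrow> prim_code i n \<Longrightarrow> prim_code c n \<Longrightarrow> prim_code x n \<Longrightarrow> prim_code (DERIVED_POS n L i c x) n"
  unfolding DERIVED_POS_def by (rule prim_code_BEX) auto

definition "LOG = Proj 0"
definition "IDX = Proj 1"
definition "CUR = NTH LOG IDX"
definition "CUR_CODE = ENT_CODE CUR"
definition "CUR_ARGS = ENT_ARGS CUR"
definition "CUR_VAL = ENT_VAL CUR"
definition "CUR_WIT = ENT_WIT CUR"

lemmas cur_defs = LOG_def IDX_def CUR_def CUR_CODE_def CUR_ARGS_def CUR_VAL_def CUR_WIT_def

definition "r_just_zero = AND (EQ (PFST CUR_CODE) (NUM 0)) (EQ CUR_VAL (NUM 0))"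
lemma r_just_zero:
  assumes i: "i < len_code L"
  defines "c \<equiv> ent_code (nth_code L i)" and "y \<equiv> ent_val (nth_code L i)"
  shows "(prim_val r_just_zero [L, i] \<noteq> 0) = (pfst c = 0 \<and> y = 0)"
  using i unfolding r_just_zero_def c_def y_def
  by (simp add: cur_defs BALL DERIVED DERIVED_POS less_imp_le numeral_2_eq_2 numeral_3_eq_3)
lemma prim_code_r_just_zero: "prim_code r_just_zero (Suc (Suc 0))"
  unfolding r_just_zero_def by (simp add: cur_defs prim_code_BALL)

definition "r_just_succ = AND (EQ (PFST CUR_CODE) (NUM 1)) (AND (SG CUR_ARGS) (EQ CUR_VAL (SUC (HD CUR_ARGS))))"
lemma r_just_succ:
  assumes i: "i < len_code L"
  defines "c \<equiv> ent_code (nth_code L i)" and "x \<equiv> ent_args (nth_code L i)" and "y \<equiv> ent_val (nth_code L i)"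
  shows "(prim_val r_just_succ [L, i] \<noteq> 0) = (pfst c = 1 \<and> x \<noteq> 0 \<and> y = Suc (hd_code x))"
  using i unfolding r_just_succ_def c_def x_def y_def
  by (simp add: cur_defs BALL DERIVED DERIVED_POS less_imp_le numeral_2_eq_2 numeral_3_eq_3)
lemma prim_code_r_just_succ: "prim_code r_just_succ (Suc (Suc 0))"
  unfolding r_just_succ_def by (simp add: cur_defs prim_code_BALL)

definition "r_just_proj = AND (EQ (PFST CUR_CODE) (NUM 2))
  (AND (LT (PSND CUR_CODE) (LEN CUR_ARGS)) (EQ CUR_VAL (NTH CUR_ARGS (PSND CUR_CODE))))"
lemma r_just_proj:
  assumes i: "i < len_code L"
  defines "c \<equiv> ent_code (nth_code L i)" and "x \<equiv> ent_args (nth_code L i)" and "y \<equiv> ent_val (nth_code L i)"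
  shows "(prim_val r_just_proj [L, i] \<noteq> 0) =
    (pfst c = 2 \<and> psnd c < len_code x \<and> y = nth_code x (psnd c))"
  using i unfolding r_just_proj_def c_def x_def y_def
  by (simp add: cur_defs BALL DERIVED DERIVED_POS less_imp_le numeral_2_eq_2 numeral_3_eq_3)
lemma prim_code_r_just_proj: "prim_code r_just_proj (Suc (Suc 0))"
  unfolding r_just_proj_def by (simp add: cur_defs prim_code_BALL)

definition "r_just_comp = AND (EQ (PFST CUR_CODE) (NUM 3))
  (AND (EQ (LEN CUR_WIT) (LEN (PSND (PSND CUR_CODE))))
  (AND (BALL (Suc (Suc 0)) (LEN (PSND (PSND CUR_CODE)))
         (DERIVED (Suc (Suc (Suc 0))) (LIFT (Suc (Suc 0)) LOG) (LIFT (Suc (Suc 0)) IDX)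
           (NTH (LIFT (Suc (Suc 0)) (PSND (PSND CUR_CODE))) (Proj 0)) (LIFT (Suc (Suc 0)) CUR_ARGS)
           (NTH (LIFT (Suc (Suc 0)) CUR_WIT) (Proj 0))))
       (DERIVED (Suc (Suc 0)) LOG IDX (PFST (PSND CUR_CODE)) CUR_WIT CUR_VAL)))"
lemma r_just_comp:
  assumes i: "i < len_code L"
  defines "c \<equiv> ent_code (nth_code L i)" and "x \<equiv> ent_args (nth_code L i)"
    and "y \<equiv> ent_val (nth_code L i)" and "w \<equiv> ent_wit (nth_code L i)"
  shows "(prim_val r_just_comp [L, i] \<noteq> 0) =
    (pfst c = 3 \<and> len_code w = len_code (psnd (psnd c)) \<and>
      (\<forall>j<len_code (psnd (psnd c)). derived_before (list_decode L) i (nth_code (psnd (psnd c)) j) x (nth_code w j)) \<and>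
      derived_before (list_decode L) i (pfst (psnd c)) w y)"
  using i unfolding r_just_comp_def c_def x_def y_def w_def
  by (simp add: cur_defs BALL DERIVED DERIVED_POS less_imp_le numeral_2_eq_2 numeral_3_eq_3) blast
lemma prim_code_r_just_comp: "prim_code r_just_comp (Suc (Suc 0))"
  unfolding r_just_comp_def by (simp add: cur_defs prim_code_BALL)

definition "r_just_prim0 = AND (EQ (PFST CUR_CODE) (NUM 4))
  (AND (SG CUR_ARGS) (AND (EQ (HD CUR_ARGS) (NUM 0))
    (DERIVED (Suc (Suc 0)) LOG IDX (PFST (PSND CUR_CODE)) (TL CUR_ARGS) CUR_VAL)))"
lemma r_just_prim0:
  assumes i: "i < len_code L"
  defines "c \<equiv> ent_code (nth_code L i)" and "x \<equiv> ent_args (nth_code L i)" and "y \<equiv> ent_val (nth_code L i)"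
  shows "(prim_val r_just_prim0 [L, i] \<noteq> 0) =
    (pfst c = 4 \<and> x \<noteq> 0 \<and> hd_code x = 0 \<and> derived_before (list_decode L) i (pfst (psnd c)) (tl_code x) y)"
  using i unfolding r_just_prim0_def c_def x_def y_def
  by (simp add: cur_defs BALL DERIVED DERIVED_POS less_imp_le numeral_2_eq_2 numeral_3_eq_3)
lemma prim_code_r_just_prim0: "prim_code r_just_prim0 (Suc (Suc 0))"
  unfolding r_just_prim0_def by (simp add: cur_defs prim_code_BALL)

definition "r_just_primS = AND (EQ (PFST CUR_CODE) (NUM 4))
  (AND (SG CUR_ARGS) (AND (SG (HD CUR_ARGS))
  (AND (DERIVED (Suc (Suc 0)) LOG IDX CUR_CODE (CONS (SUB (HD CUR_ARGS) (NUM 1)) (TL CUR_ARGS)) CUR_WIT)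
       (DERIVED (Suc (Suc 0)) LOG IDX (PSND (PSND CUR_CODE))
         (CONS (SUB (HD CUR_ARGS) (NUM 1)) (CONS CUR_WIT (TL CUR_ARGS))) CUR_VAL))))"
lemma r_just_primS:
  assumes i: "i < len_code L"
  defines "c \<equiv> ent_code (nth_code L i)" and "x \<equiv> ent_args (nth_code L i)"
    and "y \<equiv> ent_val (nth_code L i)" and "w \<equiv> ent_wit (nth_code L i)"
  shows "(prim_val r_just_primS [L, i] \<noteq> 0) =
    (pfst c = 4 \<and> x \<noteq> 0 \<and> hd_code x \<noteq> 0 \<and>
      derived_before (list_decode L) i c (cons_code (hd_code x - 1) (tl_code x)) w \<and>
      derived_before (list_decode L) i (psnd (psnd c)) (cons_code (hd_code x - 1) (cons_code w (tl_code x))) y)"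
  using i unfolding r_just_primS_def c_def x_def y_def w_def
  by (simp add: cur_defs BALL DERIVED DERIVED_POS less_imp_le numeral_2_eq_2 numeral_3_eq_3)
lemma prim_code_r_just_primS: "prim_code r_just_primS (Suc (Suc 0))"
  unfolding r_just_primS_def by (simp add: cur_defs prim_code_BALL)

definition "r_just_mn = AND (EQ (PFST CUR_CODE) (NUM 5))
  (AND (DERIVED (Suc (Suc 0)) LOG IDX (PSND CUR_CODE) (CONS CUR_VAL CUR_ARGS) (NUM 0))
       (BALL (Suc (Suc 0)) CUR_VAL
         (DERIVED_POS (Suc (Suc (Suc 0))) (LIFT (Suc (Suc 0)) LOG) (LIFT (Suc (Suc 0)) IDX)
           (LIFT (Suc (Suc 0)) (PSND CUR_CODE)) (CONS (Proj 0) (LIFT (Suc (Suc 0)) CUR_ARGS)))))"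
lemma r_just_mn:
  assumes i: "i < len_code L"
  defines "c \<equiv> ent_code (nth_code L i)" and "x \<equiv> ent_args (nth_code L i)" and "y \<equiv> ent_val (nth_code L i)"
  shows "(prim_val r_just_mn [L, i] \<noteq> 0) =
    (pfst c = 5 \<and> derived_before (list_decode L) i (psnd c) (cons_code y x) 0 \<and>
      (\<forall>m<y. derived_pos_before (list_decode L) i (psnd c) (cons_code m x)))"
  using i unfolding r_just_mn_def c_def x_def y_def
  by (simp add: cur_defs BALL DERIVED DERIVED_POS less_imp_le numeral_2_eq_2 numeral_3_eq_3) blast
lemma prim_code_r_just_mn: "prim_code r_just_mn (Suc (Suc 0))"
  unfolding r_just_mn_def by (simp add: cur_defs prim_code_BALL)

definition "r_just =
  OR r_just_zero (OR r_just_succ (OR r_just_proj (OR r_just_comp (OR r_just_prim0 (OR r_just_primS r_just_mn)))))"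

lemma r_just: assumes "i < len_code L"
  shows "prim_val r_just [L, i] = (if justified (list_decode L) i then 1 else 0)"
proof -
  have "list_decode L ! i = nth_code L i" using nth_code_eq_nth assms by simp
  then show ?thesis
    unfolding justified_def justifies_def
    using r_just_zero[OF assms] r_just_succ[OF assms] r_just_proj[OF assms] r_just_comp[OF assms]
      r_just_prim0[OF assms] r_just_primS[OF assms] r_just_mn[OF assms]
    by (simp add: r_just_def)
qed
lemma prim_code_r_just: "prim_code r_just (Suc (Suc 0))"
  by (simp add: r_just_def prim_code_r_just_zero prim_code_r_just_succ prim_code_r_just_proj prim_code_r_just_comp prim_code_r_just_prim0 prim_code_r_just_primS prim_code_r_just_mn)

definition "r_derivation = BALL (Suc 0) (LEN (Proj 0)) (Comp r_just [Proj 1, Proj 0])"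
lemma r_derivation: "prim_val r_derivation [L] = (if derivation (list_decode L) then 1 else 0)"
proof -
  have "prim_val r_derivation [L] = (if \<forall>j<len_code L. prim_val r_just [L, j] \<noteq> 0 then 1 else 0)"
    unfolding r_derivation_def by (subst BALL) auto
  also have "\<dots> = (if derivation (list_decode L) then 1 else 0)"
    using r_just by (auto simp: derivation_def len_code_def)
  finally show ?thesis .
qed
lemma prim_code_r_derivation: "prim_code r_derivation (Suc 0)"
  unfolding r_derivation_def by (rule prim_code_BALL) (auto simp: prim_code_r_just)

section \<open>The structure\<close>

text \<open>The gadget of program \<open>e\<close> is rooted at \<open>Spine e 0\<close>, from which the map climbs the spine
  \<open>Spine e k\<close> forever. The two pre-images \<open>Left e 0\<close> and \<open>Right e 0\<close> of the root start the
  branches \<open>Left e n\<close> and \<open>Right e n\<close>, with \<open>n\<close> the distance to the root. The spur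
  \<open>Spur e n k\<close> hangs below \<open>Right e n\<close> when \<open>cert e n\<close> holds; otherwise \<open>Spur e n 0\<close> is a fixed
  point, so that it still has one or two pre-images. \<open>Loop\<close> absorbs the numbers that code no gadget node.\<close>

datatype node = Spine nat nat | Left nat nat | Right nat nat | Spur nat nat nat | Loop nat nat

fun node_encode :: "node \<Rightarrow> nat" where
  "node_encode (Spine e k) = pair 0 (pair e k)"
| "node_encode (Left e n) = pair 1 (pair e n)"
| "node_encode (Right e n) = pair 2 (pair e n)"
| "node_encode (Spur e n k) = pair 3 (pair e (pair n k))"
| "node_encode (Loop t z) = pair (t + 4) z"

definition node_decode :: "nat \<Rightarrow> node" where
  "node_decode u =
    (if pfst u = 0 then Spine (pfst (psnd u)) (psnd (psnd u))
     else if pfst u = 1 then Left (pfst (psnd u)) (psnd (psnd u))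
     else if pfst u = 2 then Right (pfst (psnd u)) (psnd (psnd u))
     else if pfst u = 3 then Spur (pfst (psnd u)) (pfst (psnd (psnd u))) (psnd (psnd (psnd u)))
     else Loop (pfst u - 4) (psnd u))"

lemma node_decode_encode[simp]: "node_decode (node_encode v) = v"
  by (cases v) (auto simp: node_decode_def)

lemma node_encode_decode[simp]: "node_encode (node_decode u) = u"
proof -
  have u: "pair (pfst u) (psnd u) = u" by simp
  have v: "pair (pfst (psnd u)) (psnd (psnd u)) = psnd u" by simp
  have w: "pair (pfst (psnd (psnd u))) (psnd (psnd (psnd u))) = psnd (psnd u)" by simp
  consider "pfst u = 0" | "pfst u = 1" | "pfst u = 2" | "pfst u = 3" | "pfst u \<ge> 4" by linarith
  then show ?thesis
  proof cases
    case 5 then have "pfst u - 4 + 4 = pfst u" by simp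
    with 5 show ?thesis unfolding node_decode_def using u by simp
  qed (simp_all add: node_decode_def u v w, (metis u v)+)
qed

lemma node_encode_eq_iff[simp]: "node_encode v = node_encode w \<longleftrightarrow> v = w"
  by (metis node_decode_encode)

abbreviation root :: "nat \<Rightarrow> nat" where
  "root e \<equiv> node_encode (Spine e 0)"

definition cert :: "nat \<Rightarrow> nat \<Rightarrow> bool" where
  "cert e n \<longleftrightarrow> derivation (list_decode n) \<and> derived (list_decode n) e (list_encode [root e]) 1"

definition "r_cert = AND (Comp r_derivation [Proj 1])
  (DERIVED (Suc (Suc 0)) (Proj 1) (LEN (Proj 1)) (Proj 0) (CONS (PAIR (NUM 0) (PAIR (Proj 0) (NUM 0))) (NUM 0)) (NUM 1))"

lemma r_cert: "prim_val r_cert [e, n] = (if cert e n then 1 else 0)"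
  unfolding r_cert_def by (simp add: DERIVED r_derivation cert_def len_code_def cons_code_def pair_def)

lemma prim_code_r_cert: "prim_code r_cert (Suc (Suc 0))"
  unfolding r_cert_def using prim_code_r_derivation by simp

fun node_next :: "node \<Rightarrow> node" where
  "node_next (Spine e k) = Spine e (Suc k)"
| "node_next (Left e n) = (if n = 0 then Spine e 0 else Left e (n - 1))"
| "node_next (Right e n) = (if n = 0 then Spine e 0 else Right e (n - 1))"
| "node_next (Spur e n k) = (if k = 0 then (if cert e n then Right e n else Spur e n 0) else Spur e n (k - 1))"
| "node_next (Loop t z) = Loop t z"

definition "diag_fun u = node_encode (node_next (node_decode u))"

definition node_preds :: "node \<Rightarrow> node set" where
  "node_preds v = (case v of Spine e k \<Rightarrow> (if k = 0 then {Left e 0, Right e 0} else {Spine e (k - 1)})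
     | Left e n \<Rightarrow> {Left e (Suc n)}
     | Right e n \<Rightarrow> (if cert e n then {Right e (Suc n), Spur e n 0} else {Right e (Suc n)})
     | Spur e n k \<Rightarrow> (if k = 0 \<and> \<not> cert e n then {Spur e n (Suc 0), Spur e n 0} else {Spur e n (Suc k)})
     | Loop t z \<Rightarrow> {Loop t z})"

lemma node_next_eq_iff: "node_next w = v \<longleftrightarrow> w \<in> node_preds v"
  by (cases w; cases v) (auto simp: node_preds_def split: if_splits)

definition node_branching :: "node \<Rightarrow> nat" where
  "node_branching v = (case v of Spine e k \<Rightarrow> (if k = 0 then 2 else 1)
     | Left e n \<Rightarrow> 1
     | Right e n \<Rightarrow> (if cert e n then 2 else 1)
     | Spur e n k \<Rightarrow> (if k = 0 \<and> \<not> cert e n then 2 else 1)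
     | Loop t z \<Rightarrow> 1)"

lemma card_node_preds: "card (node_preds v) = node_branching v"
  by (cases v) (auto simp: node_preds_def node_branching_def)

lemma diag_fun_vimage: "diag_fun -` {u} = node_encode ` node_preds (node_decode u)"
proof (rule set_eqI)
  fix x
  have "x \<in> diag_fun -` {u} \<longleftrightarrow> node_next (node_decode x) = node_decode u"
    unfolding diag_fun_def by (metis node_decode_encode node_encode_decode vimage_singleton_eq)
  also have "\<dots> \<longleftrightarrow> node_decode x \<in> node_preds (node_decode u)" by (rule node_next_eq_iff)
  also have "\<dots> \<longleftrightarrow> x \<in> node_encode ` node_preds (node_decode u)"
    by (metis node_decode_encode node_encode_decode image_iff)
  finally show "x \<in> diag_fun -` {u} \<longleftrightarrow> x \<in> node_encode ` node_preds (node_decode u)" .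
qed

lemma card_diag_fun_vimage: "card (diag_fun -` {u}) = node_branching (node_decode u)"
proof -
  have "inj_on node_encode (node_preds (node_decode u))" by (auto intro: inj_onI)
  then show ?thesis by (simp add: diag_fun_vimage card_image card_node_preds)
qed

definition "NODE_TAG = PFST (Proj 0)"
definition "NODE_BODY = PSND (Proj 0)"
definition "NODE_E = PFST NODE_BODY"
definition "NODE_REST = PSND NODE_BODY"

lemmas node_field_defs = NODE_TAG_def NODE_BODY_def NODE_E_def NODE_REST_def

definition "r_diag_fun =
  IF (EQ NODE_TAG (NUM 0)) (PAIR (NUM 0) (PAIR NODE_E (SUC NODE_REST)))
  (IF (EQ NODE_TAG (NUM 1))
     (IF (EQ NODE_REST (NUM 0)) (PAIR (NUM 0) (PAIR NODE_E (NUM 0)))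
        (PAIR (NUM 1) (PAIR NODE_E (SUB NODE_REST (NUM 1)))))
  (IF (EQ NODE_TAG (NUM 2))
     (IF (EQ NODE_REST (NUM 0)) (PAIR (NUM 0) (PAIR NODE_E (NUM 0)))
        (PAIR (NUM 2) (PAIR NODE_E (SUB NODE_REST (NUM 1)))))
  (IF (EQ NODE_TAG (NUM 3))
     (IF (EQ (PSND NODE_REST) (NUM 0))
        (IF (Comp r_cert [NODE_E, PFST NODE_REST]) (PAIR (NUM 2) (PAIR NODE_E (PFST NODE_REST))) (Proj 0))
        (PAIR (NUM 3) (PAIR NODE_E (PAIR (PFST NODE_REST) (SUB (PSND NODE_REST) (NUM 1))))))
  (Proj 0))))"

lemma r_diag_fun_node_encode: "prim_val r_diag_fun [node_encode v] = node_encode (node_next v)"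
  by (cases v) (auto simp: r_diag_fun_def node_field_defs r_cert)

lemma r_diag_fun: "prim_val r_diag_fun [u] = diag_fun u"
  using r_diag_fun_node_encode[of "node_decode u"] by (simp add: diag_fun_def)

lemma prim_code_r_diag_fun: "prim_code r_diag_fun (Suc 0)"
  using prim_code_r_cert by (simp add: r_diag_fun_def node_field_defs)

definition "r_node_branching =
  IF (EQ NODE_TAG (NUM 0)) (IF (EQ NODE_REST (NUM 0)) (NUM 2) (NUM 1))
  (IF (EQ NODE_TAG (NUM 2)) (IF (Comp r_cert [NODE_E, NODE_REST]) (NUM 2) (NUM 1))
  (IF (EQ NODE_TAG (NUM 3))
     (IF (AND (EQ (PSND NODE_REST) (NUM 0)) (NSG (Comp r_cert [NODE_E, PFST NODE_REST]))) (NUM 2) (NUM 1))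
  (NUM 1)))"

lemma r_node_branching_encode: "prim_val r_node_branching [node_encode v] = node_branching v"
  by (cases v) (auto simp: r_node_branching_def node_field_defs r_cert node_branching_def)

lemma r_node_branching: "prim_val r_node_branching [u] = branching diag_fun u"
  using r_node_branching_encode[of "node_decode u"] by (simp add: branching_def card_diag_fun_vimage)

lemma prim_code_r_node_branching: "prim_code r_node_branching (Suc 0)"
  using prim_code_r_cert by (simp add: r_node_branching_def node_field_defs)

lemma computable_diag_fun: "computable1 diag_fun"
  using computable1_prim_code prim_code_r_diag_fun r_diag_fun by simp

lemma computable_branching_diag_fun: "computable1 (branching diag_fun)"
  using computable1_prim_code prim_code_r_node_branching r_node_branching by simp

lemma is_21_structure_diag_fun: "is_21_structure diag_fun"
  unfolding is_21_structure_def card_diag_fun_vimage by (auto simp: node_branching_def split: node.split)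

lemma funpow_chain_iff:
  assumes ch: "\<And>u n. f u = g n \<longleftrightarrow> u = g (Suc n)"
  shows "(f ^^ m) u = g n \<longleftrightarrow> u = g (n + m)"
proof (induction m arbitrary: u n)
  case 0 then show ?case by simp
next
  case (Suc m)
  have "(f ^^ Suc m) u = (f ^^ m) (f u)" by (simp only: funpow_Suc_right o_apply)
  then show ?case using Suc ch by simp
qed

lemma tree_verts_chain:
  assumes ch: "\<And>u n. f u = g n \<longleftrightarrow> u = g (Suc n)"
  shows "tree_verts f (g 0) = range g"
  unfolding tree_verts_def using funpow_chain_iff[where f=f and g=g, OF ch] by auto

lemma tree_edges_iff:
  "(a, b) \<in> tree_edges f x \<longleftrightarrow> a \<in> tree_verts f x \<and> f a \<in> tree_verts f x \<and> b = f a"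
  by (auto simp: tree_edges_def)

lemma chain_tree_edges_iff:
  assumes ch: "\<And>u n. f u = g n \<longleftrightarrow> u = g (Suc n)" and i: "inj g"
  shows "(g i, g j) \<in> tree_edges f (g 0) \<longleftrightarrow> i = Suc j"
proof -
  have a: "f (g i) = g j \<longleftrightarrow> i = Suc j" using ch[of "g i" j] i by (auto dest: injD)
  show ?thesis unfolding tree_edges_iff tree_verts_chain[where f=f and g=g, OF ch] using a by auto
qed

lemma tree_iso_chains:
  assumes ch1: "\<And>u n. f u = g1 n \<longleftrightarrow> u = g1 (Suc n)"
    and ch2: "\<And>u n. f u = g2 n \<longleftrightarrow> u = g2 (Suc n)"
    and i1: "inj g1" and i2: "inj g2"
  shows "tree_iso f (g1 0) (g2 0)"
proof -
  define h where "h = g2 \<circ> inv g1"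
  have hg: "h (g1 i) = g2 i" for i by (simp add: h_def i1)
  have bij: "bij_betw h (range g1) (range g2)"
  proof (rule bij_betw_imageI)
    show "inj_on h (range g1)"
    proof (rule inj_onI)
      fix a b assume ab: "a \<in> range g1" "b \<in> range g1" "h a = h b"
      then obtain i j where "a = g1 i" "b = g1 j" by auto
      then show "a = b" using hg ab(3) i2 by (simp add: inj_eq)
    qed
    show "h ` range g1 = range g2" by (auto simp: hg image_iff)
  qed
  have e1: "(g1 i, g1 j) \<in> tree_edges f (g1 0) \<longleftrightarrow> i = Suc j" for i j
    by (rule chain_tree_edges_iff[where f=f and g=g1, OF ch1 i1])
  have e2: "(g2 i, g2 j) \<in> tree_edges f (g2 0) \<longleftrightarrow> i = Suc j" for i j
    by (rule chain_tree_edges_iff[where f=f and g=g2, OF ch2 i2])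
  show ?thesis unfolding tree_iso_def tree_verts_chain[where f=f and g=g1, OF ch1] tree_verts_chain[where f=f and g=g2, OF ch2]
    by (intro exI[of _ h] conjI bij) (auto simp: hg e1 e2)
qed

lemma tree_iso_sym: "tree_iso f x y \<Longrightarrow> tree_iso f y x"
proof -
  assume "tree_iso f x y"
  then obtain h where bij: "bij_betw h (tree_verts f x) (tree_verts f y)"
    and edges: "\<forall>a\<in>tree_verts f x. \<forall>b\<in>tree_verts f x. (a, b) \<in> tree_edges f x \<longleftrightarrow> (h a, h b) \<in> tree_edges f y"
    unfolding tree_iso_def by blast
  define h' where "h' = inv_into (tree_verts f x) h"
  have bij': "bij_betw h' (tree_verts f y) (tree_verts f x)"
    unfolding h'_def by (rule bij_betw_inv_into[OF bij])
  have "(a, b) \<in> tree_edges f y \<longleftrightarrow> (h' a, h' b) \<in> tree_edges f x"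
    if "a \<in> tree_verts f y" "b \<in> tree_verts f y" for a b
  proof -
    have "h (h' a) = a" "h (h' b) = b"
      using bij that unfolding h'_def by (meson bij_betw_inv_into_right)+
    moreover have "h' a \<in> tree_verts f x" "h' b \<in> tree_verts f x"
      using bij' that by (auto dest: bij_betw_apply)
    ultimately show ?thesis using edges by metis
  qed
  then show ?thesis unfolding tree_iso_def using bij' by blast
qed

text \<open>A chain has no vertex with two pre-images, and tree isomorphisms preserve pre-images.\<close>

lemma not_tree_iso_branching_chain:
  assumes ch: "\<And>u n. f u = g n \<longleftrightarrow> u = g (Suc n)"
    and p: "p1 \<noteq> p2" "f p1 = v" "f p2 = v" "p1 \<in> tree_verts f x" "p2 \<in> tree_verts f x" "v \<in> tree_verts f x"
  shows "\<not> tree_iso f x (g 0)"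
proof
  assume "tree_iso f x (g 0)"
  then obtain h where bij: "bij_betw h (tree_verts f x) (tree_verts f (g 0))"
    and edges: "\<forall>a\<in>tree_verts f x. \<forall>b\<in>tree_verts f x. (a, b) \<in> tree_edges f x \<longleftrightarrow> (h a, h b) \<in> tree_edges f (g 0)"
    unfolding tree_iso_def by blast
  obtain m where m: "h v = g m"
    using bij p(6) tree_verts_chain[where f=f and g=g, OF ch] by (auto dest: bij_betw_apply)
  have "h p = g (Suc m)" if "p \<in> tree_verts f x" "f p = v" for p
  proof -
    have "(h p, h v) \<in> tree_edges f (g 0)"
      using edges that p(6) by (auto simp: tree_edges_iff)
    then have "f (h p) = g m" using m by (simp add: tree_edges_iff)
    then show ?thesis using ch by blast
  qed
  then have "h p1 = h p2" using p by simp
  moreover have "inj_on h (tree_verts f x)" using bij by (simp add: bij_betw_def)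
  ultimately show False using p by (metis inj_onD)
qed

section \<open>The branch isomorphism function encodes self-acceptance\<close>

declare node_encode.simps[simp del]

lemma diag_fun_eq_node_encode:
  "diag_fun u = node_encode v \<longleftrightarrow> node_decode u \<in> node_preds v"
  unfolding diag_fun_def by (simp add: node_next_eq_iff)

lemma eq_node_encode_iff: "u = node_encode w \<longleftrightarrow> node_decode u = w"
  by (metis node_decode_encode node_encode_decode)

lemma diag_fun_Left_chain:
  "diag_fun u = node_encode (Left e n) \<longleftrightarrow> u = node_encode (Left e (Suc n))"
  by (subst diag_fun_eq_node_encode) (simp add: node_preds_def eq_node_encode_iff)

lemma diag_fun_Right_chain:
  "\<not> cert e n \<Longrightarrow> diag_fun u = node_encode (Right e n) \<longleftrightarrow> u = node_encode (Right e (Suc n))"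
  by (subst diag_fun_eq_node_encode) (simp add: node_preds_def eq_node_encode_iff)

lemma diag_fun_eq_root:
  "diag_fun u = root e \<longleftrightarrow> u = node_encode (Left e 0) \<or> u = node_encode (Right e 0)"
  by (subst diag_fun_eq_node_encode) (auto simp: node_preds_def eq_node_encode_iff)

lemma diag_fun_Right_Suc: "diag_fun (node_encode (Right e (Suc m))) = node_encode (Right e m)"
  by (simp add: diag_fun_eq_node_encode node_preds_def)

lemma diag_fun_pow_Right: "(diag_fun ^^ k) (node_encode (Right e (n + k))) = node_encode (Right e n)"
proof (induction k)
  case 0 then show ?case by simp
next
  case (Suc k)
  have "(diag_fun ^^ Suc k) (node_encode (Right e (n + Suc k))) = (diag_fun ^^ k) (diag_fun (node_encode (Right e (Suc (n + k)))))"
    by (simp only: funpow_Suc_right o_apply add_Suc_right)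
  then show ?case using Suc by (simp add: diag_fun_Right_Suc)
qed

lemma inj_Left: "inj (\<lambda>n. node_encode (Left e n))" by (rule injI) simp

lemma inj_Right: "inj (\<lambda>n. node_encode (Right e n))" by (rule injI) simp

lemma root_in_Lambda: "root e \<in> Lambda diag_fun"
  unfolding Lambda_def branching_def card_diag_fun_vimage by (simp add: node_branching_def)

lemma tree_iso_branches_no_cert:
  assumes "\<not> (\<exists>n. cert e n)"
  shows "tree_iso diag_fun (node_encode (Left e 0)) (node_encode (Right e 0))"
proof -
  have "tree_iso diag_fun ((\<lambda>n. node_encode (Left e n)) 0) ((\<lambda>n. node_encode (Right e n)) 0)"
    by (rule tree_iso_chains[OF diag_fun_Left_chain _ inj_Left inj_Right]) (use assms diag_fun_Right_chain in blast)
  then show ?thesis by simp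
qed

lemma not_tree_iso_branches_cert:
  assumes "cert e n"
  shows "\<not> tree_iso diag_fun (node_encode (Right e 0)) (node_encode (Left e 0))"
proof -
  let ?b0 = "node_encode (Right e 0)"
  let ?v = "node_encode (Right e n)"
  let ?p1 = "node_encode (Right e (Suc n))"
  let ?p2 = "node_encode (Spur e n 0)"
  have spur: "diag_fun ?p2 = ?v" using assms by (simp add: diag_fun_eq_node_encode node_preds_def)
  have "(diag_fun ^^ n) ?v = ?b0" using diag_fun_pow_Right[of n e 0] by simp
  then have "(diag_fun ^^ Suc n) ?p1 = ?b0" "(diag_fun ^^ Suc n) ?p2 = ?b0"
    using spur diag_fun_Right_Suc[of e n] by (simp_all only: funpow_Suc_right o_apply)
  then have "?p1 \<in> tree_verts diag_fun ?b0" "?p2 \<in> tree_verts diag_fun ?b0" "?v \<in> tree_verts diag_fun ?b0"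
    unfolding tree_verts_def using \<open>(diag_fun ^^ n) ?v = ?b0\<close> by blast+
  then show ?thesis
    using not_tree_iso_branching_chain[where g="\<lambda>n. node_encode (Left e n)", OF diag_fun_Left_chain, of ?p1 ?p2 ?v]
      spur by (simp add: diag_fun_Right_Suc)
qed

lemma iso_fun_root: "iso_fun diag_fun (root e) = (if \<exists>n. cert e n then 0 else 1)"
proof (cases "\<exists>n. cert e n")
  case True
  then have "\<not> tree_iso diag_fun x1 x2" if "x1 \<noteq> x2" "diag_fun x1 = root e" "diag_fun x2 = root e" for x1 x2
    using that not_tree_iso_branches_cert tree_iso_sym unfolding diag_fun_eq_root by blast
  then show ?thesis using True unfolding iso_fun_def by auto
next
  case False
  have "iso_fun diag_fun (root e) = 1" unfolding iso_fun_def
    by (intro if_P exI[of _ "node_encode (Left e 0)"] exI[of _ "node_encode (Right e 0)"])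
      (simp add: diag_fun_eq_root tree_iso_branches_no_cert[OF False])
  then show ?thesis using False by simp
qed

lemma ex_cert_iff_eval:
  "(\<exists>n. cert (recf_encode r) n) \<longleftrightarrow> eval r [root (recf_encode r)] 1"
proof
  assume "\<exists>n. cert (recf_encode r) n"
  then show "eval r [root (recf_encode r)] 1" unfolding cert_def using derivation_sound by blast
next
  assume "eval r [root (recf_encode r)] 1"
  then obtain L where "derivation L" "derived L (recf_encode r) (list_encode [root (recf_encode r)]) 1"
    using eval_imp_derivation by blast
  then have "cert (recf_encode r) (list_encode L)" unfolding cert_def by simp
  then show "\<exists>n. cert (recf_encode r) n" by blast
qed

theorem proposition3p2:
  shows "\<exists>f :: nat \<Rightarrow> nat. is_21_structure f \<and> computable1 f \<and> computable1 (branching f) \<and>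
           \<not> (\<exists>r. \<forall>x\<in>Lambda f. eval r [x] (iso_fun f x))"
proof (intro exI[of _ diag_fun] conjI is_21_structure_diag_fun computable_diag_fun computable_branching_diag_fun notI)
  assume "\<exists>r. \<forall>x\<in>Lambda diag_fun. eval r [x] (iso_fun diag_fun x)"
  then obtain r where r: "eval r [root (recf_encode r)] (iso_fun diag_fun (root (recf_encode r)))"
    using root_in_Lambda by blast
  show False
  proof (cases "\<exists>n. cert (recf_encode r) n")
    case True
    then have "eval r [root (recf_encode r)] 0" "eval r [root (recf_encode r)] 1"
      using r iso_fun_root ex_cert_iff_eval by simp_all
    then show False using eval_deterministic by fastforce
  next
    case False
    then show False using r iso_fun_root ex_cert_iff_eval by simp
  qed
qed

end
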